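(* Let $G\in\mathbb C^{N\times N}$ be Hermitian positive definite, let $A\in\mathbb C^{N\times N}$ satisfy $GA=A^*G$, and let $B\in\mathbb C^{N\times N}$ satisfy $GB=B^*G\ge0$. Let $C_A,C_B$ be constants with $\|A\|_G\le C_A$ and $\|B\|_G\le C_B$. Suppose that for some $\alpha>0$ there exists $\beta>0$ with $$GB+\frac1{\alpha^2}A^*GBA\ge\beta G.$$ Then there exists $\delta>0$, depending only on $\alpha,\beta,C_A,C_B$, such that $$\lim_{T\to\infty}\frac1{2T}\int_{-T}^Te^{itA^*}GBe^{-itA}\,dt\ge\delta G$$ (the limit exists).
   Context: For Hermitian matrices $M_1,M_2$, $M_1\ge M_2$ means $M_1-M_2$ is positive semidefinite. $\|M\|_G$ denotes the operator norm of $M$ with respect to the norm $v\mapsto(v^*Gv)^{1/2}$ on $\mathbb C^N$. *)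

theory Defs
  imports "HOL-Analysis.Analysis"
begin

text \<open>Square complex matrices of size n are represented as functions
  nat => nat => complex; only the entries with indices below n matter.
  Vectors in C^n are functions nat => complex (entries below n matter).\<close>

type_synonym cmat = "nat \<Rightarrow> nat \<Rightarrow> complex"
type_synonym cvec = "nat \<Rightarrow> complex"

definition meq :: "nat \<Rightarrow> cmat \<Rightarrow> cmat \<Rightarrow> bool" where
  "meq n M P \<longleftrightarrow> (\<forall>i<n. \<forall>j<n. M i j = P i j)"

definition madj :: "cmat \<Rightarrow> cmat" where
  "madj M = (\<lambda>i j. cnj (M j i))"

definition mmult :: "nat \<Rightarrow> cmat \<Rightarrow> cmat \<Rightarrow> cmat" where
  "mmult n M P = (\<lambda>i j. \<Sum>k<n. M i k * P k j)"

definition msub :: "cmat \<Rightarrow> cmat \<Rightarrow> cmat" where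
  "msub M P = (\<lambda>i j. M i j - P i j)"

definition msmult :: "complex \<Rightarrow> cmat \<Rightarrow> cmat" where
  "msmult c M = (\<lambda>i j. c * M i j)"

definition mone :: cmat where
  "mone = (\<lambda>i j. if i = j then 1 else 0)"

primrec mpow :: "nat \<Rightarrow> cmat \<Rightarrow> nat \<Rightarrow> cmat" where
  "mpow n M 0 = mone"
| "mpow n M (Suc k) = mmult n M (mpow n M k)"

definition mexp :: "nat \<Rightarrow> cmat \<Rightarrow> cmat" where
  "mexp n M = (\<lambda>i j. \<Sum>k. mpow n M k i j / of_nat (fact k))"

definition mvec :: "nat \<Rightarrow> cmat \<Rightarrow> cvec \<Rightarrow> cvec" where
  "mvec n M v = (\<lambda>i. \<Sum>j<n. M i j * v j)"

definition quad :: "nat \<Rightarrow> cmat \<Rightarrow> cvec \<Rightarrow> complex" where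
  "quad n M v = (\<Sum>i<n. \<Sum>j<n. cnj (v i) * M i j * v j)"

definition hermitian :: "nat \<Rightarrow> cmat \<Rightarrow> bool" where
  "hermitian n M \<longleftrightarrow> meq n M (madj M)"

definition psd :: "nat \<Rightarrow> cmat \<Rightarrow> bool" where
  "psd n M \<longleftrightarrow> hermitian n M \<and> (\<forall>v. 0 \<le> Re (quad n M v))"

definition pos_def :: "nat \<Rightarrow> cmat \<Rightarrow> bool" where
  "pos_def n M \<longleftrightarrow> hermitian n M \<and> (\<forall>v. (\<exists>i<n. v i \<noteq> 0) \<longrightarrow> 0 < Re (quad n M v))"

definition loewner_ge :: "nat \<Rightarrow> cmat \<Rightarrow> cmat \<Rightarrow> bool" where
  "loewner_ge n M1 M2 \<longleftrightarrow> psd n (msub M1 M2)"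

definition gnorm :: "nat \<Rightarrow> cmat \<Rightarrow> cvec \<Rightarrow> real" where
  "gnorm n G v = sqrt (Re (quad n G v))"

definition opnorm_G :: "nat \<Rightarrow> cmat \<Rightarrow> cmat \<Rightarrow> real" where
  "opnorm_G n G M = Sup {gnorm n G (mvec n M v) / gnorm n G v | v. gnorm n G v \<noteq> 0}"

definition integrand :: "nat \<Rightarrow> cmat \<Rightarrow> cmat \<Rightarrow> cmat \<Rightarrow> real \<Rightarrow> cmat" where
  "integrand n G A B t =
     mmult n (mexp n (msmult (\<i> * of_real t) (madj A)))
       (mmult n (mmult n G B) (mexp n (msmult (- \<i> * of_real t) A)))"

definition time_avg :: "nat \<Rightarrow> cmat \<Rightarrow> cmat \<Rightarrow> cmat \<Rightarrow> real \<Rightarrow> cmat" where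
  "time_avg n G A B T =
     (\<lambda>i j. complex_of_real (1 / (2 * T)) * integral {-T..T} (\<lambda>t. integrand n G A B t i j))"

end

theory Submission
  imports Defs "Jordan_Normal_Form.Jordan_Normal_Form_Existence"
begin

text \<open>
  The hypothesis G A = A^* G says that A is self-adjoint for the inner
  product (x, y) \<mapsto> x^* G y, G being positive definite.  Hence A = S D S^-1 with D real
  diagonal, and eigenvectors of distinct eigenvalues are G-orthogonal.  We derive this
  from the Jordan normal form: the Gram matrix K = S^* G S intertwines J^* and J, which
  forces the Jordan matrix J to be real diagonal.

  In the eigenbasis e^{-itA} = S e^{-itD} S^-1, so each entry of the integrand is a finite
  combination of the exponentials e^{it(d_a - d_b)}, whose time averages tend to 1 if
  d_a = d_b and to 0 otherwise.  So the limit L exists, and its quadratic form is the sum,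
  over the eigenvalues c, of the G B-form of the component of v in the c-eigenspace.

  Every eigenvalue satisfies |c| \<le> \<parallel>A\<parallel>_G \<le> C_A, and on the c-eigenspace the hypothesis reads
  \<beta> G \<le> (1 + c^2/\<alpha>^2) G B.  Summing over the G-orthogonal eigenspaces gives L \<ge> \<delta> G with
  \<delta> = \<beta> / (1 + C_A^2/\<alpha>^2).
\<close>

lemma sum_mone_right: "a < n \<Longrightarrow> (\<Sum>m<n. f m * mone m a) = f a"
  by (simp add: mone_def if_distrib cong: if_cong)

lemma sum_mone_left:
  assumes "a < n" shows "(\<Sum>m<n. mone a m * f m) = f a"
proof -
  have "(\<Sum>m<n. mone a m * f m) = (\<Sum>m<n. if a = m then f m else 0)"
    by (rule sum.cong) (auto simp: mone_def)
  then show ?thesis using assms by simp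
qed

lemma sum_single_term:
  assumes "a < (n::nat)" and "\<And>c. c < n \<Longrightarrow> c \<noteq> a \<Longrightarrow> f c = 0"
  shows "(\<Sum>c<n. f c) = f a"
proof -
  have "(\<Sum>c<n. f c) = f a + sum f ({..<n} - {a})" using assms(1) by (intro sum.remove) auto
  also have "sum f ({..<n} - {a}) = 0" using assms(2) by (intro sum.neutral) auto
  finally show ?thesis by simp
qed

lemma sum_two_terms:
  assumes "a < (n::nat)" "b < n" "a \<noteq> b" and "\<And>c. c < n \<Longrightarrow> c \<noteq> a \<Longrightarrow> c \<noteq> b \<Longrightarrow> f c = 0"
  shows "(\<Sum>c<n. f c) = f a + f b"
proof -
  have "(\<Sum>c<n. f c) = f a + sum f ({..<n} - {a})" using assms(1) by (intro sum.remove) auto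
  also have "sum f ({..<n} - {a}) = f b + sum f ({..<n} - {a} - {b})"
    using assms(2,3) by (intro sum.remove) auto
  also have "sum f ({..<n} - {a} - {b}) = 0" using assms(4) by (intro sum.neutral) auto
  finally show ?thesis by simp
qed

lemma sum_swap_inner: "(\<Sum>p\<in>P. \<Sum>q\<in>Q. \<Sum>k\<in>K. f p q k) = (\<Sum>p\<in>P. \<Sum>k\<in>K. \<Sum>q\<in>Q. f p q k)"
  by (rule sum.cong[OF refl], rule sum.swap)

lemma sum_rotate3: "(\<Sum>p\<in>P. \<Sum>q\<in>Q. \<Sum>k\<in>K. f p q k) = (\<Sum>q\<in>Q. \<Sum>k\<in>K. \<Sum>p\<in>P. f p q k)"
  by (subst sum.swap) (rule sum_swap_inner)

lemma sum_reverse3: "(\<Sum>p\<in>P. \<Sum>q\<in>Q. \<Sum>k\<in>K. f p q k) = (\<Sum>k\<in>K. \<Sum>q\<in>Q. \<Sum>p\<in>P. f p q k)"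
  by (subst sum_rotate3) (rule sum.swap)

section \<open>Sesquilinear forms\<close>

definition sform :: "nat \<Rightarrow> cmat \<Rightarrow> cvec \<Rightarrow> cvec \<Rightarrow> complex" where
  "sform n X x y = (\<Sum>i<n. \<Sum>j<n. cnj (x i) * X i j * y j)"

lemma quad_sform: "quad n X v = sform n X v v"
  by (simp add: quad_def sform_def)

lemma sform_cong:
  "(\<And>i. i < n \<Longrightarrow> x i = x' i) \<Longrightarrow> (\<And>i. i < n \<Longrightarrow> y i = y' i) \<Longrightarrow> sform n X x y = sform n X x' y'"
  by (simp add: sform_def)

lemma sform_sum_left:
  "sform n X (\<lambda>i. \<Sum>c\<in>C. f c * z c i) y = (\<Sum>c\<in>C. cnj (f c) * sform n X (z c) y)"
  by (simp add: sform_def sum_distrib_left sum_distrib_right mult_ac sum.swap[of _ C])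

lemma sform_sum_right:
  "sform n X x (\<lambda>i. \<Sum>c\<in>C. f c * z c i) = (\<Sum>c\<in>C. f c * sform n X x (z c))"
  by (simp add: sform_def sum_distrib_left sum_distrib_right mult_ac sum.swap[of _ C])

lemma sform_scale_left: "sform n X (\<lambda>i. c * x i) y = cnj c * sform n X x y"
  by (simp add: sform_def sum_distrib_left mult_ac)

lemma sform_scale_right: "sform n X x (\<lambda>i. c * y i) = c * sform n X x y"
  by (simp add: sform_def sum_distrib_left mult_ac)

lemma quad_scale: "quad n M (\<lambda>a. of_real c * y a) = of_real (c\<^sup>2) * quad n M y"
  by (simp add: quad_def sum_distrib_left power2_eq_square mult_ac)

lemma sform_mmult_right: "sform n (mmult n Z P) x y = sform n Z x (mvec n P y)"
proof -
  have "sform n (mmult n Z P) x y = (\<Sum>i<n. \<Sum>j<n. \<Sum>k<n. cnj (x i) * Z i k * (P k j * y j))"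
    by (simp add: sform_def mmult_def sum_distrib_left sum_distrib_right mult_ac)
  also have "\<dots> = (\<Sum>i<n. \<Sum>k<n. \<Sum>j<n. cnj (x i) * Z i k * (P k j * y j))"
    by (rule sum_swap_inner)
  also have "\<dots> = sform n Z x (mvec n P y)"
    by (simp add: sform_def mvec_def sum_distrib_left)
  finally show ?thesis .
qed

lemma sform_mmult_adj_left: "sform n (mmult n (madj P) Z) x y = sform n Z (mvec n P x) y"
proof -
  have "sform n (mmult n (madj P) Z) x y = (\<Sum>i<n. \<Sum>j<n. \<Sum>k<n. (cnj (x i) * cnj (P k i)) * Z k j * y j)"
    by (simp add: sform_def mmult_def madj_def sum_distrib_left sum_distrib_right mult_ac)
  also have "\<dots> = (\<Sum>k<n. \<Sum>j<n. \<Sum>i<n. (cnj (x i) * cnj (P k i)) * Z k j * y j)"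
    by (rule sum_reverse3)
  also have "\<dots> = sform n Z (mvec n P x) y"
    by (simp add: sform_def mvec_def sum_distrib_left sum_distrib_right cnj_sum mult_ac)
  finally show ?thesis .
qed

lemma quad_congruence: "quad n (mmult n (mmult n (madj P) X) P) v = quad n X (mvec n P v)"
  by (simp only: quad_sform sform_mmult_right[of n "mmult n (madj P) X"] sform_mmult_adj_left)

lemma quad_adjoint_sandwich:
  "quad n (mmult n (mmult n (mmult n (madj A) G) B) A) u = quad n (mmult n G B) (mvec n A u)"
proof -
  have "quad n (mmult n (mmult n (mmult n (madj A) G) B) A) u
      = sform n (mmult n (madj A) G) u (mvec n B (mvec n A u))"
    unfolding quad_sform by (simp only: sform_mmult_right[of n "mmult n (mmult n (madj A) G) B"]
                                       sform_mmult_right[of n "mmult n (madj A) G"])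
  also have "\<dots> = sform n G (mvec n A u) (mvec n B (mvec n A u))"
    by (rule sform_mmult_adj_left)
  also have "\<dots> = quad n (mmult n G B) (mvec n A u)"
    unfolding quad_sform by (rule sform_mmult_right[symmetric])
  finally show ?thesis .
qed

lemma mmult3_sform: "mmult n E1 (mmult n X E2) i j = sform n X (\<lambda>m. cnj (E1 i m)) (\<lambda>p. E2 p j)"
  by (simp add: sform_def mmult_def sum_distrib_left mult_ac)

lemma sform_hermitian:
  assumes "hermitian n X" shows "sform n X x y = cnj (sform n X y x)"
proof -
  have h: "X i j = cnj (X j i)" if "i < n" "j < n" for i j
    using assms that unfolding hermitian_def meq_def madj_def by blast
  have "sform n X x y = (\<Sum>i<n. \<Sum>j<n. cnj (x i) * cnj (X j i) * y j)"
    unfolding sform_def by (rule sum.cong[OF refl], rule sum.cong[OF refl]) (subst h, auto)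
  also have "\<dots> = (\<Sum>j<n. \<Sum>i<n. cnj (x i) * cnj (X j i) * y j)"
    by (rule sum.swap)
  also have "\<dots> = cnj (sform n X y x)"
    unfolding sform_def cnj_sum complex_cnj_mult complex_cnj_cnj
    by (rule sum.cong[OF refl], rule sum.cong[OF refl]) (simp only: mult.commute mult.left_commute)
  finally show ?thesis .
qed

lemma sform_selfadjoint:
  assumes "meq n (mmult n G A) (mmult n (madj A) G)"
  shows "sform n G (mvec n A x) y = sform n G x (mvec n A y)"
proof -
  have "sform n G (mvec n A x) y = (\<Sum>p<n. \<Sum>q<n. \<Sum>k<n. cnj (x k) * (cnj (A p k) * G p q) * y q)"
    by (simp add: sform_def mvec_def sum_distrib_left sum_distrib_right mult_ac)
  also have "\<dots> = (\<Sum>k<n. \<Sum>q<n. cnj (x k) * (\<Sum>p<n. cnj (A p k) * G p q) * y q)"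
    by (subst sum_reverse3) (simp add: sum_distrib_left sum_distrib_right)
  also have "\<dots> = (\<Sum>k<n. \<Sum>q<n. cnj (x k) * (\<Sum>p<n. G k p * A p q) * y q)"
    using assms by (auto simp: meq_def mmult_def madj_def intro!: sum.cong)
  also have "\<dots> = sform n G x (mvec n A y)"
    by (simp add: sform_def mvec_def sum_distrib_left sum_distrib_right mult_ac)
       (subst sum_swap_inner, simp add: mult_ac)
  finally show ?thesis .
qed

lemma quad_msub: "quad n (msub X Y) v = quad n X v - quad n Y v"
  by (simp add: quad_def msub_def algebra_simps sum_subtractf)

lemma quad_add_smult: "quad n (\<lambda>i j. X i j + c * Y i j) v = quad n X v + c * quad n Y v"
  by (simp add: quad_def algebra_simps sum.distrib sum_distrib_left)

lemma quad_msmult: "quad n (msmult c Y) v = c * quad n Y v"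
  by (simp add: quad_def msmult_def sum_distrib_left mult_ac)

lemma quad_pos_def_nonneg:
  assumes "pos_def n G" shows "0 \<le> Re (quad n G v)"
proof (cases "\<exists>i<n. v i \<noteq> 0")
  case True then show ?thesis using assms by (auto simp: pos_def_def intro: less_imp_le)
next
  case False then have "quad n G v = 0" by (auto simp: quad_def intro!: sum.neutral)
  then show ?thesis by simp
qed

definition level_part :: "(nat \<Rightarrow> real) \<Rightarrow> real \<Rightarrow> cvec \<Rightarrow> cvec" where
  "level_part d c y = (\<lambda>a. if d a = c then y a else 0)"

lemma level_part_scale:
  "level_part d c (\<lambda>a. of_real (d a) * y a) = (\<lambda>a. of_real c * level_part d c y a)"
  by (auto simp: level_part_def)

lemma quad_level_parts:
  fixes d :: "nat \<Rightarrow> real"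
  shows "(\<Sum>c\<in>d`{..<n}. quad n M (level_part d c y))
           = (\<Sum>a<n. \<Sum>b<n. if d a = d b then cnj (y a) * M a b * y b else 0)"
proof -
  have "(\<Sum>c\<in>d`{..<n}. quad n M (level_part d c y))
      = (\<Sum>c\<in>d`{..<n}. \<Sum>a<n. \<Sum>b<n. if d a = c \<and> d b = c then cnj (y a) * M a b * y b else 0)"
    unfolding quad_def level_part_def by (intro sum.cong refl) auto
  also have "\<dots> = (\<Sum>a<n. \<Sum>b<n. \<Sum>c\<in>d`{..<n}. if d a = c \<and> d b = c then cnj (y a) * M a b * y b else 0)"
    by (rule sum_rotate3)
  also have "\<dots> = (\<Sum>a<n. \<Sum>b<n. if d a = d b then cnj (y a) * M a b * y b else 0)"
  proof (intro sum.cong refl)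
    fix a b assume a: "a \<in> {..<n}"
    have "(\<Sum>c\<in>d`{..<n}. if d a = c \<and> d b = c then cnj (y a) * M a b * y b else 0)
        = (\<Sum>c\<in>d`{..<n}. if d a = c then (if d a = d b then cnj (y a) * M a b * y b else 0) else 0)"
      by (rule sum.cong) auto
    also have "\<dots> = (if d a = d b then cnj (y a) * M a b * y b else 0)" using a by (simp add: sum.delta)
    finally show "(\<Sum>c\<in>d`{..<n}. if d a = c \<and> d b = c then cnj (y a) * M a b * y b else 0)
        = (if d a = d b then cnj (y a) * M a b * y b else 0)" .
  qed
  finally show ?thesis .
qed

lemma quad_level_parts_block:
  fixes d :: "nat \<Rightarrow> real"
  assumes "\<And>a b. a < n \<Longrightarrow> b < n \<Longrightarrow> d a \<noteq> d b \<Longrightarrow> M a b = 0"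
  shows "(\<Sum>c\<in>d`{..<n}. quad n M (level_part d c y)) = quad n M y"
proof -
  have "(\<Sum>a<n. \<Sum>b<n. if d a = d b then cnj (y a) * M a b * y b else 0) = quad n M y"
    unfolding quad_def using assms by (intro sum.cong refl) auto
  then show ?thesis by (simp only: quad_level_parts)
qed

definition inverse_pair :: "nat \<Rightarrow> cmat \<Rightarrow> cmat \<Rightarrow> bool" where
  "inverse_pair n S Q \<longleftrightarrow> (\<forall>i<n. \<forall>j<n. (\<Sum>k<n. S i k * Q k j) = mone i j)
                        \<and> (\<forall>i<n. \<forall>j<n. (\<Sum>k<n. Q i k * S k j) = mone i j)"

lemma inverse_pair_madj:
  assumes "inverse_pair n S Q" shows "inverse_pair n (madj Q) (madj S)"
proof -
  have conj: "(\<Sum>k<n. madj Y i k * madj X k j) = mone i j"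
    if "(\<Sum>k<n. X j k * Y k i) = mone j i" for X Y :: cmat and i j
  proof -
    have "cnj (\<Sum>k<n. X j k * Y k i) = mone i j" using that by (simp add: mone_def)
    then show ?thesis by (simp add: madj_def cnj_sum mult_ac)
  qed
  show ?thesis using assms conj unfolding inverse_pair_def by blast
qed

lemma inverse_pair_mvec:
  assumes "inverse_pair n S Q" and "i < n"
  shows "mvec n S (mvec n Q v) i = v i"
proof -
  have "mvec n S (mvec n Q v) i = (\<Sum>a<n. \<Sum>j<n. S i a * Q a j * v j)"
    by (simp add: mvec_def sum_distrib_left mult.assoc)
  also have "\<dots> = (\<Sum>j<n. (\<Sum>a<n. S i a * Q a j) * v j)"
    by (subst sum.swap) (simp add: sum_distrib_right)
  also have "\<dots> = (\<Sum>j<n. mone i j * v j)"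
    using assms by (intro sum.cong refl) (auto simp: inverse_pair_def)
  also have "\<dots> = v i" using assms(2) by (rule sum_mone_left)
  finally show ?thesis .
qed

definition colv :: "cmat \<Rightarrow> nat \<Rightarrow> cvec" where
  "colv S a = (\<lambda>i. S i a)"

lemma mvec_colv: "mvec n S y = (\<lambda>i. \<Sum>a<n. y a * colv S a i)"
  by (simp add: mvec_def colv_def mult.commute)

definition gram :: "nat \<Rightarrow> cmat \<Rightarrow> cmat \<Rightarrow> cmat" where
  "gram n X S = (\<lambda>a b. sform n X (colv S a) (colv S b))"

lemma quad_gram: "quad n X (mvec n S y) = quad n (gram n X S) y"
  unfolding quad_sform mvec_colv sform_sum_left sform_sum_right
  by (simp add: sform_def gram_def sum_distrib_left mult_ac)

lemma gram_hermitian: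
  assumes "hermitian n X" shows "cnj (gram n X S a b) = gram n X S b a"
  unfolding gram_def using sform_hermitian[OF assms, of "colv S b" "colv S a"] by simp

lemma gram_diag_pos:
  assumes pd: "pos_def n G" and inv: "inverse_pair n S Q" and a: "a < n"
  shows "0 < Re (gram n G S a a)"
proof -
  have "\<exists>i<n. S i a \<noteq> 0"
  proof (rule ccontr)
    assume "\<not> ?thesis"
    then have "(\<Sum>k<n. Q a k * S k a) = 0" by simp
    with inv a show False by (auto simp: inverse_pair_def mone_def)
  qed
  with pd show ?thesis by (auto simp: pos_def_def quad_sform colv_def gram_def)
qed

lemma similarity_column:
  assumes inv: "inverse_pair n S Q"
    and A: "\<forall>i<n. \<forall>j<n. A i j = (\<Sum>l<n. \<Sum>m<n. S i l * X l m * Q m j)"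
    and i: "i < n" and a: "a < n"
  shows "mvec n A (colv S a) i = (\<Sum>l<n. X l a * colv S l i)"
proof -
  have "mvec n A (colv S a) i = (\<Sum>k<n. \<Sum>l<n. \<Sum>m<n. S i l * X l m * (Q m k * S k a))"
    using A i by (simp add: mvec_def colv_def sum_distrib_right mult.assoc)
  also have "\<dots> = (\<Sum>l<n. \<Sum>m<n. S i l * X l m * (\<Sum>k<n. Q m k * S k a))"
    by (subst sum_rotate3) (simp add: sum_distrib_left)
  also have "\<dots> = (\<Sum>l<n. \<Sum>m<n. S i l * X l m * mone m a)"
    using inv a by (intro sum.cong refl) (auto simp: inverse_pair_def)
  also have "\<dots> = (\<Sum>l<n. S i l * X l a)"
    by (intro sum.cong refl sum_mone_right a)
  finally show ?thesis by (simp add: colv_def mult.commute)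
qed

section \<open>Real diagonalisation of G-self-adjoint matrices\<close>

lemma jordan_matrix_structure:
  "i < sum_list (map fst n_as) \<Longrightarrow> j < sum_list (map fst n_as) \<Longrightarrow>
   jordan_matrix n_as $$ (i,j) \<noteq> 0 \<Longrightarrow> i \<noteq> j \<Longrightarrow>
   j = Suc i \<and> jordan_matrix n_as $$ (i,i) = jordan_matrix n_as $$ (j,j)"
proof (induction n_as arbitrary: i j)
  case Nil
  then show ?case by simp
next
  case (Cons p n_as)
  obtain m a where p: "p = (m,a)" by (cases p)
  let ?s = "sum_list (map fst n_as)"
  from Cons.prems have i: "i < m + ?s" and j: "j < m + ?s" by (auto simp: p)
  have idx0: "\<And>x y. x < m + ?s \<Longrightarrow> y < m + ?s \<Longrightarrow> jordan_matrix (p#n_as) $$ (x,y) =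
     (if x < m then if y < m then jordan_block m a $$ (x,y) else 0
      else if y < m then 0 else jordan_matrix n_as $$ (x-m,y-m))"
    by (simp add: p jordan_matrix_Cons)
  note idx = idx0[OF i j] and idxi = idx0[OF i i] and idxj = idx0[OF j j]
  show ?case
  proof (cases "i < m")
    case True
    then show ?thesis using Cons.prems idx idxi idxj by (auto split: if_splits)
  next
    case False
    then have "\<not> j < m" using Cons.prems idx by (auto split: if_splits)
    then have "jordan_matrix n_as $$ (i-m,j-m) \<noteq> 0" using False Cons.prems idx
      by (auto split: if_splits)
    from Cons.IH[OF _ _ this] False \<open>\<not> j < m\<close> i j Cons.prems(4)
    have "j - m = Suc (i - m) \<and> jordan_matrix n_as $$ (i-m, i-m) = jordan_matrix n_as $$ (j-m, j-m)"
      by auto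
    then show ?thesis using False \<open>\<not> j < m\<close> idxi idxj by (auto split: if_splits)
  qed
qed

lemma mat_mult_index:
  "X \<in> carrier_mat n n \<Longrightarrow> Y \<in> carrier_mat n n \<Longrightarrow> i < n \<Longrightarrow> j < n \<Longrightarrow>
   (X * Y) $$ (i,j) = (\<Sum>k<n. X $$ (i,k) * Y $$ (k,j))"
  by (auto simp: scalar_prod_def lessThan_atLeast0 intro!: sum.cong)

lemma jordan_decomposition:
  fixes A :: cmat
  shows "\<exists>S Q J. inverse_pair n S Q \<and>
     (\<forall>i<n. \<forall>j<n. A i j = (\<Sum>l<n. \<Sum>m<n. S i l * J l m * Q m j)) \<and>
     (\<forall>i<n. \<forall>j<n. J i j \<noteq> 0 \<longrightarrow> i \<noteq> j \<longrightarrow> j = Suc i \<and> J i i = J j j)"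
proof -
  define Am where "Am = mat n n (\<lambda>(i,j). A i j)"
  have Am: "Am \<in> carrier_mat n n" by (simp add: Am_def)
  obtain as where "char_poly Am = (\<Prod>a\<leftarrow>as. [:- a, 1:])" using char_poly_factorized[OF Am] by blast
  from jordan_nf_exists[OF Am this] obtain n_as where "jordan_nf Am n_as" by blast
  then obtain P R where w: "similar_mat_wit Am (jordan_matrix n_as) P R"
    unfolding jordan_nf_def similar_mat_def by blast
  let ?J = "jordan_matrix n_as"
  from w have c: "?J \<in> carrier_mat n n" "P \<in> carrier_mat n n" "R \<in> carrier_mat n n"
    and e: "P * R = 1\<^sub>m n" "R * P = 1\<^sub>m n" "Am = P * ?J * R"
    using Am unfolding similar_mat_wit_def Let_def by auto
  have s: "sum_list (map fst n_as) = n" using c(1) by auto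
  define S where "S = (\<lambda>i j. P $$ (i,j))"
  define Q where "Q = (\<lambda>i j. R $$ (i,j))"
  define J where "J = (\<lambda>i j. ?J $$ (i,j))"
  have "inverse_pair n S Q"
    unfolding inverse_pair_def
    using e(1,2)[THEN arg_cong, of "\<lambda>M. M $$ (_,_)"] mat_mult_index[OF c(2) c(3)] mat_mult_index[OF c(3) c(2)]
    by (auto simp: S_def Q_def mone_def)
  moreover have "A i j = (\<Sum>l<n. \<Sum>m<n. S i l * J l m * Q m j)" if ij: "i < n" "j < n" for i j
  proof -
    have "A i j = (P * ?J * R) $$ (i,j)" using arg_cong[OF e(3), of "\<lambda>M. M $$ (i,j)"] ij
      by (simp add: Am_def)
    also have "\<dots> = (\<Sum>m<n. (\<Sum>l<n. S i l * J l m) * Q m j)"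
      using mat_mult_index[OF mult_carrier_mat[OF c(2,1)] c(3) ij] mat_mult_index[OF c(2) c(1) ij(1)]
      by (simp add: S_def Q_def J_def)
    also have "\<dots> = (\<Sum>l<n. \<Sum>m<n. S i l * J l m * Q m j)"
      by (simp add: sum_distrib_right) (rule sum.swap)
    finally show ?thesis .
  qed
  moreover have "\<forall>i<n. \<forall>j<n. J i j \<noteq> 0 \<longrightarrow> i \<noteq> j \<longrightarrow> j = Suc i \<and> J i i = J j j"
    using jordan_matrix_structure[of _ n_as] s by (simp add: J_def)
  ultimately show ?thesis by blast
qed

text \<open>
  The key step: a Jordan matrix J that is self-adjoint for a Gram matrix K with non-zero
  diagonal, i.e. J^* K = K J, is diagonal with real entries.  Reading J^* K = K J at entry
  (i, i) shows that J i i is real as soon as column i of J has no off-diagonal entry;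
  reading it at entry (i, i+1) then shows that the superdiagonal entry J i (i+1) vanishes,
  so by induction along the diagonal all superdiagonal entries vanish.\<close>

context
  fixes n :: nat and J K :: cmat
  assumes jordan: "\<forall>i<n. \<forall>j<n. J i j \<noteq> 0 \<longrightarrow> i \<noteq> j \<longrightarrow> j = Suc i \<and> J i i = J j j"
    and intertwines: "\<And>a b. a < n \<Longrightarrow> b < n \<Longrightarrow> (\<Sum>c<n. cnj (J c a) * K c b) = (\<Sum>c<n. J c b * K a c)"
    and gram_nonzero: "\<And>a. a < n \<Longrightarrow> K a a \<noteq> 0"
begin

lemma diagonal_real_if_column_isolated:
  assumes a: "a < n" and col: "\<And>c. c < n \<Longrightarrow> c \<noteq> a \<Longrightarrow> J c a = 0"
  shows "cnj (J a a) = J a a"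
proof -
  have "(\<Sum>c<n. cnj (J c a) * K c a) = cnj (J a a) * K a a"
    by (rule sum_single_term) (use a col in auto)
  moreover have "(\<Sum>c<n. J c a * K a c) = J a a * K a a"
    by (rule sum_single_term) (use a col in auto)
  ultimately have "cnj (J a a) * K a a = J a a * K a a" using intertwines[OF a a] by argo
  with gram_nonzero[OF a] show ?thesis by simp
qed

lemma superdiagonal_vanishes_if_column_isolated:
  assumes i: "Suc i < n" and col: "\<And>c. c < n \<Longrightarrow> c \<noteq> i \<Longrightarrow> J c i = 0"
  shows "J i (Suc i) = 0"
proof (rule ccontr)
  assume nz: "J i (Suc i) \<noteq> 0"
  have real: "cnj (J i i) = J i i" using i col by (intro diagonal_real_if_column_isolated) auto
  have eq: "J i i = J (Suc i) (Suc i)" using jordan[rule_format, of i "Suc i"] nz i by simp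
  have colj: "J c (Suc i) = 0" if "c < n" "c \<noteq> i" "c \<noteq> Suc i" for c
    using jordan[rule_format, of c "Suc i"] that i by auto
  have "(\<Sum>c<n. cnj (J c i) * K c (Suc i)) = cnj (J i i) * K i (Suc i)"
    by (rule sum_single_term) (use col i in auto)
  moreover have "(\<Sum>c<n. J c (Suc i) * K i c) = J i (Suc i) * K i i + J (Suc i) (Suc i) * K i (Suc i)"
    by (rule sum_two_terms) (use colj i in auto)
  ultimately have "cnj (J i i) * K i (Suc i) = J i (Suc i) * K i i + J (Suc i) (Suc i) * K i (Suc i)"
    using intertwines[of i "Suc i"] i by simp
  then have "J i (Suc i) * K i i = 0" using real eq by simp
  with nz gram_nonzero[of i] i show False by simp
qed

lemma superdiagonal_vanishes: "Suc i < n \<Longrightarrow> J i (Suc i) = 0"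
proof (induction i)
  case 0
  have "J c 0 = 0" if "c < n" "c \<noteq> 0" for c
    using jordan[rule_format, of c 0] that by auto
  then show ?case using 0 by (intro superdiagonal_vanishes_if_column_isolated)
next
  case (Suc i)
  have "J c (Suc i) = 0" if c: "c < n" "c \<noteq> Suc i" for c
  proof (rule ccontr)
    assume nz: "J c (Suc i) \<noteq> 0"
    then have "c = i" using jordan[rule_format, of c "Suc i"] c Suc.prems by auto
    with nz Suc.IH Suc.prems show False by simp
  qed
  then show ?case using Suc.prems by (intro superdiagonal_vanishes_if_column_isolated)
qed

lemma jordan_real_diagonal:
  assumes ij: "i < n" "j < n"
  shows "J i j = (if i = j then of_real (Re (J i i)) else 0)"
proof (cases "i = j")
  case True
  have "J c i = 0" if "c < n" "c \<noteq> i" for c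
  proof (rule ccontr)
    assume "J c i \<noteq> 0"
    then have "i = Suc c" using jordan[rule_format, of c i] that ij by auto
    with \<open>J c i \<noteq> 0\<close> superdiagonal_vanishes[of c] ij show False by simp
  qed
  then have "cnj (J i i) = J i i" using ij by (intro diagonal_real_if_column_isolated) auto
  then show ?thesis using True by (simp add: complex_eq_iff)
next
  case False
  have "J i j = 0"
  proof (rule ccontr)
    assume "J i j \<noteq> 0"
    then have "j = Suc i" using jordan[rule_format, of i j] False ij by auto
    with \<open>J i j \<noteq> 0\<close> superdiagonal_vanishes[of i] ij show False by simp
  qed
  then show ?thesis using False by simp
qed

end

lemma selfadjoint_real_diagonalization:
  assumes pd: "pos_def n G" and sa: "meq n (mmult n G A) (mmult n (madj A) G)"
  shows "\<exists>S Q d. inverse_pair n S Q \<and> (\<forall>i<n. \<forall>j<n. A i j = (\<Sum>l<n. S i l * of_real (d l) * Q l j))"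
proof -
  obtain S Q J where inv: "inverse_pair n S Q"
    and AJ: "\<forall>i<n. \<forall>j<n. A i j = (\<Sum>l<n. \<Sum>m<n. S i l * J l m * Q m j)"
    and jordan: "\<forall>i<n. \<forall>j<n. J i j \<noteq> 0 \<longrightarrow> i \<noteq> j \<longrightarrow> j = Suc i \<and> J i i = J j j"
    using jordan_decomposition[of n A] by auto
  let ?K = "gram n G S"
  have col: "mvec n A (colv S a) i = (\<Sum>c<n. J c a * colv S c i)" if "i < n" "a < n" for i a
    using similarity_column[OF inv AJ that] .
  have intertwines: "(\<Sum>c<n. cnj (J c a) * ?K c b) = (\<Sum>c<n. J c b * ?K a c)"
    if ab: "a < n" "b < n" for a b
  proof -
    have "(\<Sum>c<n. cnj (J c a) * ?K c b) = sform n G (\<lambda>i. \<Sum>c<n. J c a * colv S c i) (colv S b)"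
      by (simp add: sform_sum_left gram_def)
    also have "\<dots> = sform n G (mvec n A (colv S a)) (colv S b)"
      by (rule sform_cong) (use col ab in auto)
    also have "\<dots> = sform n G (colv S a) (mvec n A (colv S b))" by (rule sform_selfadjoint[OF sa])
    also have "\<dots> = sform n G (colv S a) (\<lambda>i. \<Sum>c<n. J c b * colv S c i)"
      by (rule sform_cong) (use col ab in auto)
    also have "\<dots> = (\<Sum>c<n. J c b * ?K a c)"
      by (simp add: sform_sum_right gram_def)
    finally show ?thesis .
  qed
  have gram_nonzero: "?K a a \<noteq> 0" if "a < n" for a
    using gram_diag_pos[OF pd inv that] by auto
  define d where "d l = Re (J l l)" for l
  have diagJ: "J l m = (if l = m then of_real (d l) else 0)" if "l < n" "m < n" for l m
    using jordan_real_diagonal[OF jordan intertwines gram_nonzero that] by (simp add: d_def)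
  have row: "(\<Sum>m<n. S i l * J l m * Q m j) = S i l * of_real (d l) * Q l j" if "l < n" for i j l
  proof -
    have "(\<Sum>m<n. S i l * J l m * Q m j) = S i l * J l l * Q l j"
      by (rule sum_single_term) (use that diagJ in auto)
    then show ?thesis using diagJ[OF that that] by simp
  qed
  have "A i j = (\<Sum>l<n. S i l * of_real (d l) * Q l j)" if "i < n" "j < n" for i j
    using AJ that row by simp
  with inv show ?thesis by blast
qed

section \<open>Exponential of a diagonalised matrix\<close>

lemma mpow_diagonalized:
  assumes inv: "inverse_pair n S Q"
    and X: "\<forall>i<n. \<forall>j<n. X i j = (\<Sum>l<n. S i l * e l * Q l j)"
  shows "\<forall>i<n. \<forall>j<n. mpow n X k i j = (\<Sum>l<n. S i l * e l ^ k * Q l j)"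
proof (induction k)
  case 0
  then show ?case using inv by (simp add: inverse_pair_def)
next
  case (Suc k)
  show ?case
  proof (intro allI impI)
    fix i j assume ij: "i < n" "j < n"
    have "mpow n X (Suc k) i j
        = (\<Sum>m<n. (\<Sum>l<n. S i l * e l * Q l m) * (\<Sum>p<n. S m p * e p ^ k * Q p j))"
      using Suc X ij by (simp add: mmult_def)
    also have "\<dots> = (\<Sum>m<n. \<Sum>l<n. \<Sum>p<n. (S i l * e l) * (Q l m * S m p) * (e p ^ k * Q p j))"
      by (simp add: sum_product mult_ac)
    also have "\<dots> = (\<Sum>l<n. \<Sum>p<n. (S i l * e l) * (\<Sum>m<n. Q l m * S m p) * (e p ^ k * Q p j))"
      by (subst sum_rotate3) (simp add: sum_distrib_left sum_distrib_right)
    also have "\<dots> = (\<Sum>l<n. \<Sum>p<n. (S i l * e l) * mone l p * (e p ^ k * Q p j))"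
      using inv by (intro sum.cong refl) (auto simp: inverse_pair_def)
    also have "\<dots> = (\<Sum>l<n. S i l * e l * (e l ^ k * Q l j))"
    proof (intro sum.cong refl)
      fix l assume "l \<in> {..<n}"
      then show "(\<Sum>p<n. S i l * e l * mone l p * (e p ^ k * Q p j)) = S i l * e l * (e l ^ k * Q l j)"
        using sum_mone_left[of l n "\<lambda>p. S i l * e l * (e p ^ k * Q p j)"] by (simp add: mult_ac)
    qed
    finally show "mpow n X (Suc k) i j = (\<Sum>l<n. S i l * e l ^ Suc k * Q l j)"
      by (simp add: mult_ac)
  qed
qed

lemma mexp_diagonalized:
  assumes inv: "inverse_pair n S Q"
    and X: "\<forall>i<n. \<forall>j<n. X i j = (\<Sum>l<n. S i l * e l * Q l j)"
    and ij: "i < n" "j < n"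
  shows "mexp n (msmult c X) i j = (\<Sum>l<n. S i l * exp (c * e l) * Q l j)"
proof -
  have cX: "\<forall>i<n. \<forall>j<n. msmult c X i j = (\<Sum>l<n. S i l * (c * e l) * Q l j)"
    using X by (simp add: msmult_def sum_distrib_left mult_ac)
  note powers = mpow_diagonalized[OF inv cX]
  have "(\<lambda>k. \<Sum>l<n. S i l * Q l j * ((c * e l) ^ k /\<^sub>R fact k)) sums (\<Sum>l<n. S i l * Q l j * exp (c * e l))"
    by (intro sums_sum sums_mult exp_converges)
  moreover have "(\<Sum>l<n. S i l * Q l j * ((c * e l) ^ k /\<^sub>R fact k))
                 = mpow n (msmult c X) k i j / of_nat (fact k)" for k
    using powers ij by (simp add: sum_divide_distrib scaleR_conv_of_real field_simps)
  ultimately have "(\<lambda>k. mpow n (msmult c X) k i j / of_nat (fact k)) sums (\<Sum>l<n. S i l * Q l j * exp (c * e l))"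
    by simp
  then show ?thesis unfolding mexp_def by (simp add: sums_iff mult_ac)
qed

section \<open>Time averages of exponentials\<close>

lemma has_integral_exp_it:
  fixes x T :: real assumes T: "T > 0"
  shows "((\<lambda>t. exp (\<i> * of_real t * of_real x)) has_integral
           (if x = 0 then of_real (2*T)
            else (exp (\<i> * of_real T * of_real x) - exp (\<i> * of_real (-T) * of_real x)) / (\<i> * of_real x))) {-T..T}"
proof (cases "x = 0")
  case True
  have "((\<lambda>t. 1::complex) has_integral (Henstock_Kurzweil_Integration.content {-T..T}) *\<^sub>R 1) {-T..T}"
    by (rule has_integral_const_real)
  then show ?thesis using True T by (simp add: scaleR_conv_of_real content_real)
next
  case False
  let ?F = "\<lambda>z::complex. exp (\<i> * z * of_real x) / (\<i> * of_real x)"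
  have "(?F has_field_derivative exp (\<i> * of_real t * of_real x)) (at (of_real t))" for t :: real
  proof -
    have "(?F has_field_derivative exp (\<i> * of_real t * of_real x) * (\<i> * of_real x) / (\<i> * of_real x))
            (at (of_real t))"
      by (auto intro!: derivative_eq_intros)
    then show ?thesis using False by simp
  qed
  then have "((\<lambda>t. exp (\<i> * of_real t * of_real x)) has_integral (?F (of_real T) - ?F (of_real (-T)))) {-T..T}"
    using T by (intro fundamental_theorem_of_calculus) (auto intro: has_vector_derivative_real_field)
  then show ?thesis using False by (simp add: diff_divide_distrib)
qed

lemma time_average_exp_it:
  fixes x :: real
  shows "((\<lambda>T. of_real (1/(2*T)) * integral {-T..T} (\<lambda>t. exp (\<i> * of_real t * of_real x)))
           \<longlongrightarrow> (if x = 0 then 1 else 0)) at_top"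
proof (cases "x = 0")
  case True
  have "\<forall>\<^sub>F T in at_top. of_real (1/(2*T)) * integral {-T..T} (\<lambda>t. exp (\<i> * of_real t * of_real x)) = (1::complex)"
    using eventually_gt_at_top[of 0]
  proof eventually_elim
    case (elim T)
    from integral_unique[OF has_integral_exp_it[OF elim, of x]] True elim show ?case
      by (simp add: field_simps)
  qed
  then show ?thesis unfolding if_P[OF True] by (rule tendsto_eventually)
next
  case False
  have "\<forall>\<^sub>F T in at_top. norm (of_real (1/(2*T)) * integral {-T..T} (\<lambda>t. exp (\<i> * of_real t * of_real x)))
                          \<le> (1/\<bar>x\<bar>) * (1/T)"
    using eventually_gt_at_top[of 0]
  proof eventually_elim
    case (elim T)
    let ?e1 = "exp (\<i> * of_real T * of_real x)" and ?e2 = "exp (\<i> * of_real (-T) * of_real x)"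
    have "norm ?e1 = 1" "norm ?e2 = 1" by (simp_all add: norm_exp_eq_Re)
    then have "norm (?e1 - ?e2) \<le> 2" using norm_triangle_ineq4[of ?e1 ?e2] by simp
    then have "norm ((?e1 - ?e2) / (\<i> * of_real x)) \<le> 2 / \<bar>x\<bar>"
      using False by (simp add: norm_divide norm_mult divide_right_mono)
    then have "\<bar>1/(2*T)\<bar> * norm ((?e1 - ?e2) / (\<i> * of_real x)) \<le> \<bar>1/(2*T)\<bar> * (2 / \<bar>x\<bar>)"
      by (rule mult_left_mono) simp
    then have "norm (of_real (1/(2*T)) * ((?e1 - ?e2) / (\<i> * of_real x))) \<le> (1/\<bar>x\<bar>) * (1/T)"
      using elim False by (simp only: norm_mult norm_of_real) (simp add: field_simps)
    moreover have "integral {-T..T} (\<lambda>t. exp (\<i> * of_real t * of_real x)) = (?e1 - ?e2) / (\<i> * of_real x)"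
      using integral_unique[OF has_integral_exp_it[OF elim, of x]] False by simp
    ultimately show ?case by simp
  qed
  moreover have "((\<lambda>T. (1/\<bar>x\<bar>) * (1/T)) \<longlongrightarrow> (1/\<bar>x\<bar>) * 0) at_top"
    by (intro tendsto_mult tendsto_const tendsto_divide_0[OF tendsto_const]
              filterlim_at_top_imp_at_infinity[OF filterlim_ident])
  ultimately show ?thesis using False by (simp add: Lim_null_comparison)
qed

lemma time_average_exp_sum:
  fixes x :: "nat \<Rightarrow> nat \<Rightarrow> real"
  assumes f: "\<And>t. f t = (\<Sum>a<n. \<Sum>b<n. c a b * exp (\<i> * of_real t * of_real (x a b)))"
  shows "((\<lambda>T. of_real (1/(2*T)) * integral {-T..T} f) \<longlongrightarrow>
           (\<Sum>a<n. \<Sum>b<n. c a b * (if x a b = 0 then 1 else 0))) at_top"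
proof -
  let ?I = "\<lambda>y T. integral {-T..T} (\<lambda>t. exp (\<i> * of_real t * of_real y))"
  have "\<forall>\<^sub>F T in at_top. (\<Sum>a<n. \<Sum>b<n. c a b * (of_real (1/(2*T)) * ?I (x a b) T)) =
                               of_real (1/(2*T)) * integral {-T..T} f"
    using eventually_gt_at_top[of 0]
  proof eventually_elim
    case (elim T)
    have "((\<lambda>t. exp (\<i> * of_real t * of_real y)) has_integral ?I y T) {-T..T}" for y
      using has_integral_exp_it[OF elim, of y] by (rule has_integral_integrable[THEN integrable_integral])
    then have "(f has_integral (\<Sum>a<n. \<Sum>b<n. c a b * ?I (x a b) T)) {-T..T}"
      unfolding f[abs_def] by (intro has_integral_sum finite_lessThan has_integral_mult_right)
    then have "integral {-T..T} f = (\<Sum>a<n. \<Sum>b<n. c a b * ?I (x a b) T)" by (rule integral_unique)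
    then show ?case by (simp add: sum_distrib_left mult_ac)
  qed
  moreover have "((\<lambda>T. \<Sum>a<n. \<Sum>b<n. c a b * (of_real (1/(2*T)) * ?I (x a b) T)) \<longlongrightarrow>
           (\<Sum>a<n. \<Sum>b<n. c a b * (if x a b = 0 then 1 else 0))) at_top"
    by (intro tendsto_sum tendsto_mult tendsto_const time_average_exp_it)
  ultimately show ?thesis by (rule Lim_transform_eventually[rotated])
qed

section \<open>Analysis in a G-orthogonal eigenbasis\<close>

lemma mvec_cong: "(\<And>j. j < n \<Longrightarrow> v j = w j) \<Longrightarrow> mvec n M v = mvec n M w"
  by (simp add: mvec_def)

locale G_eigenbasis =
  fixes n :: nat and G A S Q :: cmat and d :: "nat \<Rightarrow> real"
  assumes pos: "pos_def n G"
    and selfadjoint: "meq n (mmult n G A) (mmult n (madj A) G)"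
    and inv: "inverse_pair n S Q"
    and diag: "\<forall>i<n. \<forall>j<n. A i j = (\<Sum>l<n. S i l * of_real (d l) * Q l j)"
begin

lemma A_eigenvector:
  assumes i: "i < n" and a: "a < n"
  shows "mvec n A (colv S a) i = of_real (d a) * colv S a i"
proof -
  have row: "(\<Sum>m<n. S i l * (if l = m then of_real (d l) else 0) * Q m j) = S i l * of_real (d l) * Q l j"
    if "l < n" for i j l
    using sum_single_term[of l n "\<lambda>m. S i l * (if l = m then of_real (d l) else 0) * Q m j"] that by simp
  have "\<forall>i<n. \<forall>j<n. A i j = (\<Sum>l<n. \<Sum>m<n. S i l * (if l = m then of_real (d l) else 0) * Q m j)"
    using diag row by simp
  from similarity_column[OF inv this i a]
  have "mvec n A (colv S a) i = (\<Sum>l<n. (if l = a then of_real (d l) else 0) * colv S l i)" .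
  also have "\<dots> = of_real (d a) * colv S a i"
    using sum_single_term[of a n "\<lambda>l. (if l = a then of_real (d l) else 0) * colv S l i"] a by simp
  finally show ?thesis .
qed

lemma A_coords:
  assumes i: "i < n" shows "mvec n A (mvec n S y) i = mvec n S (\<lambda>a. of_real (d a) * y a) i"
proof -
  have "mvec n A (mvec n S y) i = (\<Sum>a<n. mvec n A (colv S a) i * y a)"
    by (simp add: mvec_def colv_def sum_distrib_left sum_distrib_right mult.assoc) (rule sum.swap)
  also have "\<dots> = (\<Sum>a<n. of_real (d a) * colv S a i * y a)"
    by (intro sum.cong refl) (simp add: A_eigenvector i)
  also have "\<dots> = mvec n S (\<lambda>a. of_real (d a) * y a) i"
    by (simp add: mvec_def colv_def mult_ac)
  finally show ?thesis .
qed

lemma quad_coords: "quad n X v = quad n (gram n X S) (mvec n Q v)"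
proof -
  have "quad n X v = quad n X (mvec n S (mvec n Q v))"
    unfolding quad_sform by (rule sform_cong) (simp_all add: inverse_pair_mvec[OF inv])
  then show ?thesis by (simp only: quad_gram)
qed

lemma quad_A_coords: "quad n X (mvec n A v) = quad n (gram n X S) (\<lambda>a. of_real (d a) * mvec n Q v a)"
proof -
  have "mvec n A v = mvec n A (mvec n S (mvec n Q v))"
    by (rule mvec_cong) (simp add: inverse_pair_mvec[OF inv])
  then have "quad n X (mvec n A v) = quad n X (mvec n S (\<lambda>a. of_real (d a) * mvec n Q v a))"
    unfolding quad_sform by (intro sform_cong) (simp_all add: A_coords)
  then show ?thesis by (simp only: quad_gram)
qed

lemma gram_block:
  assumes ab: "a < n" "b < n" and neq: "d a \<noteq> d b"
  shows "gram n G S a b = 0"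
proof -
  have "of_real (d a) * gram n G S a b = sform n G (mvec n A (colv S a)) (colv S b)"
    using sform_cong[of n "mvec n A (colv S a)" "\<lambda>i. of_real (d a) * colv S a i" "colv S b" "colv S b" G]
      A_eigenvector ab by (simp add: sform_scale_left gram_def)
  also have "\<dots> = sform n G (colv S a) (mvec n A (colv S b))"
    by (rule sform_selfadjoint[OF selfadjoint])
  also have "\<dots> = of_real (d b) * gram n G S a b"
    using sform_cong[of n "colv S a" "colv S a" "mvec n A (colv S b)" "\<lambda>i. of_real (d b) * colv S b i" G]
      A_eigenvector ab by (simp add: sform_scale_right gram_def)
  finally have "(of_real (d a) - of_real (d b)) * gram n G S a b = 0" by (simp add: algebra_simps)
  with neq show ?thesis by simp
qed

lemma quad_G_split: "quad n G v = (\<Sum>c\<in>d`{..<n}. quad n (gram n G S) (level_part d c (mvec n Q v)))"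
  unfolding quad_coords[of G] by (rule quad_level_parts_block[symmetric]) (rule gram_block)

lemma quad_gram_nonneg:
  assumes "\<And>u. 0 \<le> Re (quad n X u)" shows "0 \<le> Re (quad n (gram n X S) y)"
  using assms[of "mvec n S y"] by (simp only: quad_gram)

lemma quad_A_le:
  assumes m: "\<forall>a<n. \<bar>d a\<bar> \<le> m"
  shows "Re (quad n G (mvec n A v)) \<le> m\<^sup>2 * Re (quad n G v)"
proof -
  let ?K = "gram n G S" and ?w = "mvec n Q v" and ?D = "d ` {..<n}"
  have nonneg: "0 \<le> Re (quad n ?K y)" for y by (rule quad_gram_nonneg) (rule quad_pos_def_nonneg[OF pos])
  have "quad n G (mvec n A v) = (\<Sum>c\<in>?D. quad n ?K (level_part d c (\<lambda>a. of_real (d a) * ?w a)))"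
    unfolding quad_A_coords by (rule quad_level_parts_block[symmetric]) (rule gram_block)
  also have "\<dots> = (\<Sum>c\<in>?D. of_real (c\<^sup>2) * quad n ?K (level_part d c ?w))"
    by (simp only: level_part_scale quad_scale)
  finally have "Re (quad n G (mvec n A v)) = (\<Sum>c\<in>?D. c\<^sup>2 * Re (quad n ?K (level_part d c ?w)))"
    by (simp add: Re_sum)
  also have "\<dots> \<le> (\<Sum>c\<in>?D. m\<^sup>2 * Re (quad n ?K (level_part d c ?w)))"
  proof (rule sum_mono)
    fix c assume "c \<in> ?D"
    then have "c\<^sup>2 \<le> m\<^sup>2" using m abs_le_square_iff[of c m] by auto
    then show "c\<^sup>2 * Re (quad n ?K (level_part d c ?w)) \<le> m\<^sup>2 * Re (quad n ?K (level_part d c ?w))"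
      using nonneg by (rule mult_right_mono)
  qed
  also have "\<dots> = m\<^sup>2 * Re (quad n G v)"
    by (simp add: quad_G_split[of v] Re_sum sum_distrib_left)
  finally show ?thesis .
qed

lemma opnorm_ratios_bdd: "bdd_above {gnorm n G (mvec n A v) / gnorm n G v |v. gnorm n G v \<noteq> 0}"
proof -
  define m where "m = Max (insert 0 ((\<lambda>a. \<bar>d a\<bar>) ` {..<n}))"
  have m0: "0 \<le> m" unfolding m_def by (intro Max_ge) auto
  have "\<forall>a<n. \<bar>d a\<bar> \<le> m" unfolding m_def by (auto intro: Max_ge)
  note A_le = quad_A_le[OF this]
  show ?thesis
  proof (rule bdd_aboveI, safe)
    fix v assume nz: "gnorm n G v \<noteq> 0"
    have gpos: "0 < gnorm n G v" using nz quad_pos_def_nonneg[OF pos, of v] by (simp add: gnorm_def)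
    have "gnorm n G (mvec n A v) \<le> sqrt (m\<^sup>2 * Re (quad n G v))"
      unfolding gnorm_def using A_le by (rule real_sqrt_le_mono)
    also have "\<dots> = m * gnorm n G v" using m0 by (simp add: gnorm_def real_sqrt_mult)
    finally show "gnorm n G (mvec n A v) / gnorm n G v \<le> m" using gpos by (simp add: divide_le_eq)
  qed
qed

text \<open>Each basis vector is an eigenvector, so |d a| is one of these ratios; hence it is
  bounded by their supremum, the G-operator norm.\<close>

lemma eigenvalue_le_opnorm:
  assumes a: "a < n" shows "\<bar>d a\<bar> \<le> opnorm_G n G A"
proof -
  let ?v = "colv S a" and ?k = "Re (gram n G S a a)"
  have kpos: "0 < ?k" using gram_diag_pos[OF pos inv a] .
  have gv: "gnorm n G ?v = sqrt ?k" by (simp add: gnorm_def gram_def quad_sform)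
  have "quad n G (mvec n A ?v) = sform n G (\<lambda>i. of_real (d a) * ?v i) (\<lambda>i. of_real (d a) * ?v i)"
    unfolding quad_sform by (rule sform_cong) (simp_all add: A_eigenvector a)
  also have "\<dots> = of_real ((d a)\<^sup>2) * gram n G S a a"
    by (simp add: sform_scale_left sform_scale_right gram_def power2_eq_square)
  finally have "gnorm n G (mvec n A ?v) = \<bar>d a\<bar> * sqrt ?k"
    by (simp add: gnorm_def real_sqrt_mult)
  then have "gnorm n G (mvec n A ?v) / gnorm n G ?v = \<bar>d a\<bar>" using gv kpos by simp
  moreover have "gnorm n G ?v \<noteq> 0" using gv kpos by simp
  ultimately have "\<bar>d a\<bar> \<in> {gnorm n G (mvec n A v) / gnorm n G v |v. gnorm n G v \<noteq> 0}" by force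
  then show ?thesis unfolding opnorm_G_def using opnorm_ratios_bdd by (rule cSup_upper)
qed

text \<open>
  The hypothesis restricted to the c-eigenspace.  For u in that eigenspace A u = c u, so the
  term A^* G B A contributes c^2 u^* G B u.\<close>

lemma eigenspace_coercivity:
  fixes \<alpha> \<beta> :: real and B :: cmat
  assumes hyp: "loewner_ge n (\<lambda>i j. mmult n G B i j
                       + complex_of_real (1 / \<alpha>\<^sup>2) * mmult n (mmult n (mmult n (madj A) G) B) A i j)
                  (msmult (complex_of_real \<beta>) G)"
  shows "\<beta> * Re (quad n (gram n G S) (level_part d c w))
           \<le> (1 + c\<^sup>2/\<alpha>\<^sup>2) * Re (quad n (gram n (mmult n G B) S) (level_part d c w))"
proof -
  let ?y = "level_part d c w" and ?GB = "mmult n G B"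
  let ?u = "mvec n S ?y" and ?M = "gram n ?GB S"
  define W where "W = mmult n (mmult n (mmult n (madj A) G) B) A"
  have "(\<lambda>a. of_real (d a) * ?y a) = (\<lambda>a. of_real c * ?y a)"
    by (auto simp: level_part_def)
  then have Au: "mvec n A ?u i = mvec n S (\<lambda>a. of_real c * ?y a) i" if "i < n" for i
    using A_coords[OF that, of ?y] by simp
  have "quad n W ?u = quad n ?GB (mvec n A ?u)"
    unfolding W_def by (rule quad_adjoint_sandwich)
  also have "\<dots> = quad n ?GB (mvec n S (\<lambda>a. of_real c * ?y a))"
    unfolding quad_sform by (rule sform_cong) (simp_all add: Au)
  also have "\<dots> = of_real (c\<^sup>2) * quad n ?M ?y" by (simp only: quad_gram quad_scale)
  finally have qW: "quad n W ?u = of_real (c\<^sup>2) * quad n ?M ?y" .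
  have "0 \<le> Re (quad n (msub (\<lambda>i j. ?GB i j + complex_of_real (1 / \<alpha>\<^sup>2) * W i j)
                  (msmult (complex_of_real \<beta>) G)) ?u)"
    using hyp unfolding loewner_ge_def psd_def W_def by blast
  also have "quad n (msub (\<lambda>i j. ?GB i j + complex_of_real (1 / \<alpha>\<^sup>2) * W i j) (msmult (complex_of_real \<beta>) G)) ?u
       = quad n ?M ?y + of_real (1/\<alpha>\<^sup>2) * (of_real (c\<^sup>2) * quad n ?M ?y) - of_real \<beta> * quad n (gram n G S) ?y"
    by (simp only: quad_msub quad_add_smult quad_msmult qW) (simp only: quad_gram)
  finally show ?thesis by (simp add: algebra_simps)
qed

text \<open>The limit of the time averages: Q^* P Q, where P keeps those entries of the Gram
  matrix S^* X S that link equal eigenvalues (Q = S^-1).\<close>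

definition avg_limit :: "cmat \<Rightarrow> cmat" where
  "avg_limit X = (\<lambda>i j. \<Sum>a<n. \<Sum>b<n. cnj (Q a i) * gram n X S a b * Q b j * (if d a = d b then 1 else 0))"

lemma integrand_expansion:
  assumes ij: "i < n" "j < n"
  shows "integrand n G A B t i j = (\<Sum>a<n. \<Sum>b<n. (cnj (Q a i) * gram n (mmult n G B) S a b * Q b j)
            * exp (\<i> * of_real t * of_real (d a - d b)))"
proof -
  have adjA: "\<forall>i<n. \<forall>j<n. madj A i j = (\<Sum>l<n. madj Q i l * of_real (d l) * madj S l j)"
    using diag by (simp add: madj_def cnj_sum mult_ac)
  let ?E1 = "mexp n (msmult (\<i> * of_real t) (madj A))"
  let ?E2 = "mexp n (msmult (- \<i> * of_real t) A)"
  let ?e = "\<lambda>a. exp (\<i> * of_real t * of_real (d a))"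
  let ?e' = "\<lambda>b. exp (- \<i> * of_real t * of_real (d b))"
  have E1: "?E1 i m = (\<Sum>l<n. madj Q i l * ?e l * madj S l m)" if "m < n" for m
    using mexp_diagonalized[OF inverse_pair_madj[OF inv] adjA ij(1) that] .
  have E2: "?E2 p j = (\<Sum>l<n. S p l * ?e' l * Q l j)" if "p < n" for p
    using mexp_diagonalized[OF inv diag that ij(2)] .
  have "integrand n G A B t i j = sform n (mmult n G B) (\<lambda>m. cnj (?E1 i m)) (\<lambda>p. ?E2 p j)"
    unfolding integrand_def by (rule mmult3_sform)
  also have "\<dots> = sform n (mmult n G B) (\<lambda>m. \<Sum>a<n. (Q a i * cnj (?e a)) * colv S a m)
                                       (\<lambda>p. \<Sum>b<n. (?e' b * Q b j) * colv S b p)"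
  proof (rule sform_cong)
    fix m assume "m < n"
    show "cnj (?E1 i m) = (\<Sum>a<n. (Q a i * cnj (?e a)) * colv S a m)"
      unfolding E1[OF \<open>m < n\<close>] by (simp add: cnj_sum madj_def colv_def mult_ac)
  next
    fix p assume "p < n"
    show "?E2 p j = (\<Sum>b<n. (?e' b * Q b j) * colv S b p)"
      unfolding E2[OF \<open>p < n\<close>] by (simp add: colv_def mult_ac)
  qed
  also have "\<dots> = (\<Sum>a<n. \<Sum>b<n. (cnj (Q a i) * gram n (mmult n G B) S a b * Q b j) * (?e a * ?e' b))"
    unfolding sform_sum_left sform_sum_right by (simp add: gram_def sum_distrib_left mult_ac)
  also have "\<dots> = (\<Sum>a<n. \<Sum>b<n. (cnj (Q a i) * gram n (mmult n G B) S a b * Q b j)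
            * exp (\<i> * of_real t * of_real (d a - d b)))"
    by (simp add: exp_add[symmetric] algebra_simps)
  finally show ?thesis .
qed

lemma time_avg_tendsto:
  assumes "i < n" "j < n"
  shows "((\<lambda>T. time_avg n G A B T i j) \<longlongrightarrow> avg_limit (mmult n G B) i j) at_top"
  using time_average_exp_sum[OF integrand_expansion[OF assms]]
  by (simp add: time_avg_def avg_limit_def mult_ac)

lemma quad_avg_limit:
  "quad n (avg_limit X) v = (\<Sum>c\<in>d`{..<n}. quad n (gram n X S) (level_part d c (mvec n Q v)))"
proof -
  define P where "P = (\<lambda>a b. gram n X S a b * (if d a = d b then 1 else 0))"
  have "avg_limit X = mmult n (mmult n (madj Q) P) Q"
  proof (intro ext)
    fix i j
    have "mmult n (mmult n (madj Q) P) Q i j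
        = (\<Sum>b<n. \<Sum>a<n. cnj (Q a i) * gram n X S a b * Q b j * (if d a = d b then 1 else 0))"
      by (simp add: mmult_def madj_def P_def sum_distrib_right sum_distrib_left mult_ac)
    also have "\<dots> = avg_limit X i j" unfolding avg_limit_def by (rule sum.swap)
    finally show "avg_limit X i j = mmult n (mmult n (madj Q) P) Q i j" by simp
  qed
  then have "quad n (avg_limit X) v = quad n P (mvec n Q v)" by (simp only: quad_congruence)
  also have "\<dots> = (\<Sum>a<n. \<Sum>b<n. if d a = d b
                       then cnj (mvec n Q v a) * gram n X S a b * mvec n Q v b else 0)"
    unfolding quad_def P_def by (intro sum.cong refl) auto
  also have "\<dots> = (\<Sum>c\<in>d`{..<n}. quad n (gram n X S) (level_part d c (mvec n Q v)))"
    by (rule quad_level_parts[symmetric])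
  finally show ?thesis .
qed

lemma avg_limit_hermitian:
  assumes "hermitian n X" shows "cnj (avg_limit X j i) = avg_limit X i j"
proof -
  have "cnj (avg_limit X j i)
      = (\<Sum>a<n. \<Sum>b<n. Q a j * cnj (gram n X S a b) * cnj (Q b i) * (if d a = d b then 1 else 0))"
    unfolding avg_limit_def cnj_sum by (intro sum.cong refl) simp
  also have "\<dots> = (\<Sum>a<n. \<Sum>b<n. Q a j * gram n X S b a * cnj (Q b i) * (if d a = d b then 1 else 0))"
    by (simp only: gram_hermitian[OF assms])
  also have "\<dots> = (\<Sum>b<n. \<Sum>a<n. Q a j * gram n X S b a * cnj (Q b i) * (if d a = d b then 1 else 0))"
    by (rule sum.swap)
  also have "\<dots> = avg_limit X i j" unfolding avg_limit_def
    by (intro sum.cong refl) (simp add: mult_ac eq_commute)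
  finally show ?thesis .
qed

text \<open>Combining the eigenvalue bound |c| \<le> C_A with the hypothesis on the c-eigenspace.\<close>

lemma level_part_lower_bound:
  fixes \<alpha> \<beta> CA :: real and B :: cmat
  assumes "\<alpha> > 0" and GB: "psd n (mmult n G B)" and nA: "opnorm_G n G A \<le> CA"
    and hyp: "loewner_ge n (\<lambda>i j. mmult n G B i j
                       + complex_of_real (1 / \<alpha>\<^sup>2) * mmult n (mmult n (mmult n (madj A) G) B) A i j)
                  (msmult (complex_of_real \<beta>) G)"
    and c: "c \<in> d ` {..<n}"
  shows "\<beta> / (1 + CA\<^sup>2/\<alpha>\<^sup>2) * Re (quad n (gram n G S) (level_part d c w))
           \<le> Re (quad n (gram n (mmult n G B) S) (level_part d c w))"
proof -
  let ?K = "gram n G S" and ?M = "gram n (mmult n G B) S"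
  from c obtain a where a: "a < n" "c = d a" by auto
  have "\<bar>c\<bar> \<le> \<bar>CA\<bar>" using eigenvalue_le_opnorm[OF a(1)] nA a(2) by linarith
  then have "c\<^sup>2 \<le> CA\<^sup>2" by (simp only: abs_le_square_iff)
  then have "1 + c\<^sup>2/\<alpha>\<^sup>2 \<le> 1 + CA\<^sup>2/\<alpha>\<^sup>2" using \<open>\<alpha> > 0\<close> by (simp add: divide_right_mono)
  moreover have "0 \<le> Re (quad n ?M (level_part d c w))"
    using GB by (intro quad_gram_nonneg) (simp add: psd_def)
  ultimately have "(1 + c\<^sup>2/\<alpha>\<^sup>2) * Re (quad n ?M (level_part d c w))
                     \<le> (1 + CA\<^sup>2/\<alpha>\<^sup>2) * Re (quad n ?M (level_part d c w))"
    by (rule mult_right_mono)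
  with eigenspace_coercivity[OF hyp, of c w]
  have "\<beta> * Re (quad n ?K (level_part d c w)) \<le> (1 + CA\<^sup>2/\<alpha>\<^sup>2) * Re (quad n ?M (level_part d c w))"
    by linarith
  moreover have "0 < 1 + CA\<^sup>2/\<alpha>\<^sup>2" by (simp add: add_pos_nonneg)
  ultimately show ?thesis by (simp add: field_simps)
qed

lemma avg_limit_lower_bound:
  fixes \<alpha> \<beta> CA :: real and B :: cmat
  assumes "\<alpha> > 0" and GB: "psd n (mmult n G B)" and nA: "opnorm_G n G A \<le> CA"
    and hyp: "loewner_ge n (\<lambda>i j. mmult n G B i j
                       + complex_of_real (1 / \<alpha>\<^sup>2) * mmult n (mmult n (mmult n (madj A) G) B) A i j)
                  (msmult (complex_of_real \<beta>) G)"
  shows "loewner_ge n (avg_limit (mmult n G B)) (msmult (complex_of_real (\<beta> / (1 + CA\<^sup>2/\<alpha>\<^sup>2))) G)"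
proof -
  let ?L = "avg_limit (mmult n G B)" and ?\<delta> = "\<beta> / (1 + CA\<^sup>2/\<alpha>\<^sup>2)"
  have quad_bound: "?\<delta> * Re (quad n G v) \<le> Re (quad n ?L v)" for v
    unfolding quad_G_split[of v] quad_avg_limit Re_sum sum_distrib_left
    by (rule sum_mono) (rule level_part_lower_bound[OF assms])
  have G_herm: "cnj (G j i) = G i j" if "i < n" "j < n" for i j
  proof -
    have "G i j = cnj (G j i)" using pos that unfolding pos_def_def hermitian_def meq_def madj_def by blast
    then show ?thesis by (metis complex_cnj_cnj)
  qed
  have L_herm: "cnj (?L j i) = ?L i j" for i j
    using avg_limit_hermitian GB by (simp add: psd_def)
  show ?thesis
    unfolding loewner_ge_def psd_def
  proof (intro conjI allI)
    show "hermitian n (msub ?L (msmult (complex_of_real ?\<delta>) G))"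
      unfolding hermitian_def meq_def msub_def msmult_def madj_def
      using L_herm G_herm by simp
    fix v
    have "Re (quad n (msub ?L (msmult (complex_of_real ?\<delta>) G)) v) = Re (quad n ?L v) - ?\<delta> * Re (quad n G v)"
      by (simp add: quad_msub quad_msmult)
    then show "0 \<le> Re (quad n (msub ?L (msmult (complex_of_real ?\<delta>) G)) v)"
      using quad_bound[of v] by linarith
  qed
qed

end

text \<open>The conclusion for one fixed quadruple n, G, A, B: diagonalise A and apply the
  estimates of the locale.\<close>

lemma time_average_lower_bound:
  fixes \<alpha> \<beta> CA :: real and G A B :: cmat
  assumes "\<alpha> > 0" and pd: "pos_def n G" and sa: "meq n (mmult n G A) (mmult n (madj A) G)"
    and "psd n (mmult n G B)" and "opnorm_G n G A \<le> CA"
    and "loewner_ge n (\<lambda>i j. mmult n G B i j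
                       + complex_of_real (1 / \<alpha>\<^sup>2) * mmult n (mmult n (mmult n (madj A) G) B) A i j)
                  (msmult (complex_of_real \<beta>) G)"
  shows "\<exists>L. (\<forall>i<n. \<forall>j<n. ((\<lambda>T. time_avg n G A B T i j) \<longlongrightarrow> L i j) at_top)
              \<and> loewner_ge n L (msmult (complex_of_real (\<beta> / (1 + CA\<^sup>2/\<alpha>\<^sup>2))) G)"
proof -
  obtain S Q d where "inverse_pair n S Q" and "\<forall>i<n. \<forall>j<n. A i j = (\<Sum>l<n. S i l * of_real (d l) * Q l j)"
    using selfadjoint_real_diagonalization[OF pd sa] by auto
  then interpret G_eigenbasis n G A S Q d
    using pd sa by unfold_locales
  have "((\<lambda>T. time_avg n G A B T i j) \<longlongrightarrow> avg_limit (mmult n G B) i j) at_top"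
    if "i < n" "j < n" for i j
    using time_avg_tendsto that .
  then show ?thesis using avg_limit_lower_bound[OF assms(1,4,5,6)] by blast
qed

theorem lemma5p2:
  fixes \<alpha> \<beta> C\<^sub>A C\<^sub>B :: real
  assumes "\<alpha> > 0" and "\<beta> > 0"
  shows "\<exists>\<delta>>0. \<forall>(n::nat) (G::cmat) (A::cmat) (B::cmat).
     pos_def n G \<and>
     meq n (mmult n G A) (mmult n (madj A) G) \<and>
     meq n (mmult n G B) (mmult n (madj B) G) \<and>
     psd n (mmult n G B) \<and>
     opnorm_G n G A \<le> C\<^sub>A \<and> opnorm_G n G B \<le> C\<^sub>B \<and>
     loewner_ge n (\<lambda>i j. mmult n G B i j
                       + complex_of_real (1 / \<alpha>\<^sup>2) * mmult n (mmult n (mmult n (madj A) G) B) A i j)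
                  (msmult (complex_of_real \<beta>) G)
     \<longrightarrow> (\<exists>L. (\<forall>i<n. \<forall>j<n. ((\<lambda>T. time_avg n G A B T i j) \<longlongrightarrow> L i j) at_top)
              \<and> loewner_ge n L (msmult (complex_of_real \<delta>) G))"
proof (intro exI[of _ "\<beta> / (1 + C\<^sub>A\<^sup>2/\<alpha>\<^sup>2)"] conjI allI impI)
  show "0 < \<beta> / (1 + C\<^sub>A\<^sup>2/\<alpha>\<^sup>2)" using assms by (simp add: add_pos_nonneg)
qed (elim conjE, rule time_average_lower_bound[OF assms(1)], assumption+)

end
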